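(* Every GSWNC ring $R$ is Dedekind-finite, i.e., whenever $a,b \in R$ satisfy $ab = 1$, then $ba = 1$.
   Context: All rings are associative with identity. An element $a$ of a ring is strongly weakly nil-clean if there exist an idempotent $e$ and a nilpotent $q$ with $eq = qe$ such that $a = q + e$ or $a = q - e$. A ring is GSWNC if every non-invertible element is strongly weakly nil-clean. *)

theory Defs
  imports Main
begin

definition idempotent :: "'a::ring_1 \<Rightarrow> bool" where
  "idempotent e \<longleftrightarrow> e * e = e"

definition nilpotent :: "'a::ring_1 \<Rightarrow> bool" where
  "nilpotent q \<longleftrightarrow> (\<exists>n::nat. q ^ n = 0)"

definition invertible :: "'a::ring_1 \<Rightarrow> bool" where
  "invertible a \<longleftrightarrow> (\<exists>b. a * b = 1 \<and> b * a = 1)"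

definition strongly_weakly_nil_clean :: "'a::ring_1 \<Rightarrow> bool" where
  "strongly_weakly_nil_clean a \<longleftrightarrow>
     (\<exists>e q. idempotent e \<and> nilpotent q \<and> e * q = q * e \<and> (a = q + e \<or> a = q - e))"

definition GSWNC :: "'a::ring_1 itself \<Rightarrow> bool" where
  "GSWNC (_ :: 'a itself) \<longleftrightarrow>
     (\<forall>a::'a. \<not> invertible a \<longrightarrow> strongly_weakly_nil_clean a)"

end

theory Submission
  imports Defs
begin

text \<open>
  Let \<open>a * b = 1\<close>. If \<open>b\<close> is not a unit, it is strongly weakly nil-clean, and after
  replacing \<open>(a, b)\<close> by \<open>(-a, -b)\<close> we may assume \<open>b = q + e\<close>. Then
  \<open>b * (1 - b) = q * (1 - q - 2 e)\<close> is nilpotent; since the powers of \<open>b\<close> are still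
  left invertible, \<open>1 - b\<close> is nilpotent, so \<open>b = 1 - (1 - b)\<close> is a unit after all.
  A one-sided inverse of a unit is its inverse.
\<close>

lemma power_mult_distrib_commuting:
  fixes x y :: "'a::monoid_mult"
  assumes "x * y = y * x"
  shows "(x * y) ^ n = x ^ n * y ^ n"
proof (induction n)
  case (Suc n)
  have "(x * y) ^ Suc n = x * (y * x ^ n) * y ^ n"
    using Suc by (simp add: mult.assoc)
  also have "\<dots> = x * (x ^ n * y) * y ^ n"
    by (simp only: power_commuting_commutes[OF assms])
  also have "\<dots> = x ^ Suc n * y ^ Suc n"
    by (simp add: mult.assoc)
  finally show ?case .
qed simp

lemma power_mult_power_eq_one:
  fixes a b :: "'a::monoid_mult"
  assumes "a * b = 1"
  shows "a ^ n * b ^ n = 1"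
proof (induction n)
  case (Suc n)
  have "a ^ Suc n * b ^ Suc n = a ^ n * (a * b) * b ^ n"
    by (simp only: power_Suc2[of a] power_Suc[of b] mult.assoc)
  with Suc assms show ?case by simp
qed simp

lemma nilpotent_mult_commuting:
  fixes q x :: "'a::ring_1"
  assumes "nilpotent q" and "q * x = x * q"
  shows "nilpotent (q * x)"
proof -
  obtain n where "q ^ n = 0" using assms(1) unfolding nilpotent_def by blast
  then have "(q * x) ^ n = 0" by (simp add: power_mult_distrib_commuting[OF assms(2)])
  then show ?thesis unfolding nilpotent_def by blast
qed

lemma nilpotent_uminus:
  fixes q :: "'a::ring_1"
  assumes "nilpotent q"
  shows "nilpotent (- q)"
proof -
  obtain n where "q ^ n = 0" using assms unfolding nilpotent_def by blast
  then have "(- q) ^ n = 0" by (simp add: power_minus[of q n])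
  then show ?thesis unfolding nilpotent_def by blast
qed

lemma invertible_uminus:
  fixes a :: "'a::ring_1"
  assumes "invertible a"
  shows "invertible (- a)"
proof -
  obtain c where "a * c = 1" "c * a = 1" using assms unfolding invertible_def by blast
  then have "- a * - c = 1 \<and> - c * - a = 1" by simp
  then show ?thesis unfolding invertible_def by blast
qed

lemma left_inverse_of_invertible:
  fixes a b :: "'a::ring_1"
  assumes "a * b = 1" and "invertible b"
  shows "b * a = 1"
proof -
  obtain c where c: "b * c = 1" "c * b = 1" using assms(2) unfolding invertible_def by blast
  have "a = (a * b) * c" using c(1) by (simp add: mult.assoc)
  then show ?thesis using assms(1) c(1) by simp
qed

lemma geometric_sum_ring_1:
  fixes y :: "'a::ring_1"
  shows "(1 - y) * (\<Sum>i<n. y ^ i) = 1 - y ^ n"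
    and "(\<Sum>i<n. y ^ i) * (1 - y) = 1 - y ^ n"
proof -
  have telescope: "(\<Sum>i<n. y ^ i - y ^ Suc i) = 1 - y ^ n"
    using sum_lessThan_telescope'[of "power y" n] by simp
  have "(1 - y) * (\<Sum>i<n. y ^ i) = (\<Sum>i<n. y ^ i - y ^ Suc i)"
    by (simp add: sum_distrib_left left_diff_distrib)
  with telescope show "(1 - y) * (\<Sum>i<n. y ^ i) = 1 - y ^ n" by simp
  have "(\<Sum>i<n. y ^ i) * (1 - y) = (\<Sum>i<n. y ^ i - y ^ Suc i)"
    by (simp add: sum_distrib_right right_diff_distrib power_commutes sum_subtractf)
  with telescope show "(\<Sum>i<n. y ^ i) * (1 - y) = 1 - y ^ n" by simp
qed

lemma invertible_one_minus_nilpotent: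
  fixes q :: "'a::ring_1"
  assumes "nilpotent q"
  shows "invertible (1 - q)"
proof -
  obtain n where "q ^ n = 0" using assms unfolding nilpotent_def by blast
  then show ?thesis
    using geometric_sum_ring_1[of q n] unfolding invertible_def by auto
qed

lemma nilpotent_commuting_factor_of_left_invertible:
  fixes a b x :: "'a::ring_1"
  assumes "a * b = 1" and "b * x = x * b" and "nilpotent (b * x)"
  shows "nilpotent x"
proof -
  obtain n where "(b * x) ^ n = 0" using assms(3) unfolding nilpotent_def by blast
  then have "b ^ n * x ^ n = 0" by (simp add: power_mult_distrib_commuting[OF assms(2)])
  then have "(a ^ n * b ^ n) * x ^ n = 0" by (simp add: mult.assoc)
  then have "x ^ n = 0" by (simp add: power_mult_power_eq_one[OF assms(1)])
  then show ?thesis unfolding nilpotent_def by blast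
qed

lemma nilpotent_mult_one_minus_if_nil_clean:
  fixes e q :: "'a::ring_1"
  assumes "idempotent e" and "nilpotent q" and "e * q = q * e"
  shows "nilpotent ((q + e) * (1 - (q + e)))"
proof -
  have "(q + e) * (1 - (q + e)) = q * (1 - q - (e + e))"
    using assms(1,3) unfolding idempotent_def by (simp add: algebra_simps)
  moreover have "q * (1 - q - (e + e)) = (1 - q - (e + e)) * q"
    using assms(3) by (simp add: algebra_simps)
  ultimately show ?thesis using nilpotent_mult_commuting[OF assms(2)] by simp
qed

lemma invertible_if_left_invertible_nil_clean:
  fixes a e q :: "'a::ring_1"
  assumes "idempotent e" and "nilpotent q" and "e * q = q * e"
    and "a * (q + e) = 1"
  shows "invertible (q + e)"
proof -
  let ?b = "q + e"
  have "?b * (1 - ?b) = (1 - ?b) * ?b" by (simp add: algebra_simps)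
  then have "nilpotent (1 - ?b)"
    using nilpotent_commuting_factor_of_left_invertible[OF assms(4)]
      nilpotent_mult_one_minus_if_nil_clean[OF assms(1-3)] by blast
  then have "invertible (1 - (1 - ?b))" by (rule invertible_one_minus_nilpotent)
  then show ?thesis by (simp add: add.commute)
qed

theorem corollary2p36:
  assumes "GSWNC TYPE('a::ring_1)"
  shows "\<forall>a b :: 'a. a * b = 1 \<longrightarrow> b * a = 1"
proof (intro allI impI)
  fix a b :: 'a
  assume ab: "a * b = 1"
  have "invertible b"
  proof (rule ccontr)
    assume "\<not> invertible b"
    then obtain e q where e: "idempotent e" and q: "nilpotent q" and eq: "e * q = q * e"
      and "b = q + e \<or> b = q - e"
      using assms unfolding GSWNC_def strongly_weakly_nil_clean_def by blast
    then consider "b = q + e" | "b = - (- q + e)" by auto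
    then have "invertible b"
    proof cases
      case 1
      then show ?thesis using invertible_if_left_invertible_nil_clean[OF e q eq] ab by blast
    next
      case 2
      have "e * - q = - q * e" using eq by simp
      moreover have "(- a) * (- q + e) = 1" using ab unfolding 2 by (simp only: minus_mult_commute)
      ultimately have "invertible (- q + e)"
        by (rule invertible_if_left_invertible_nil_clean[OF e nilpotent_uminus[OF q]])
      then have "invertible (- (- q + e))" by (rule invertible_uminus)
      with 2 show ?thesis by simp
    qed
    with \<open>\<not> invertible b\<close> show False by contradiction
  qed
  with ab show "b * a = 1" by (rule left_inverse_of_invertible)
qed

end
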